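(* Let $\mathcal A$ be a toric arrangement in $T$, $X=X_\Delta$ a good toric variety for $\mathcal A$, $B=H^*(X,\mathbb Z)$, and $G\in\mathcal L'$. Let $I\subseteq B$ be the kernel of the restriction map $H^*(X,\mathbb Z)\to H^*(G,\mathbb Z)$. Let $P_G(t)\in B[t]$ be a good lifting of the Chern polynomial of the normal bundle $N_GX$. Then the ideal $(tI,\,P_G(-t))\subseteq B[t]$ does not depend on the choice of the good lifting $P_G(t)$.
   Context: $T$ is a complex algebraic torus with character lattice $X^*(T)$; a layer is $\mathcal K_{\Gamma,\phi}=\{t\in T: x_\chi(t)=\phi(\chi)\ \forall\chi\in\Gamma\}$ with $\Gamma$ a split direct summand of $X^*(T)$ and $\phi:\Gamma\to\mathbb C^*$ a homomorphism; a toric arrangement $\mathcal A$ is a finite set of layers. A good toric variety for $\mathcal A$ is a smooth projective toric variety $X_\Delta$ such that for each layer which is a connected component of an intersection of layers of $\mathcal A$, the lattice $\Gamma$ has an integral basis $\chi_1,\dots,\chi_s$ which, for every cone of $\Delta$ with ray generators $r_1,\dots,r_h$ and after changing signs of some $\chi_i$, has all pairings $\langle\chi_i,r_j\rangle\ge0$ or all $\le0$. $\mathcal L'$ is the set of connected components of intersections of closures in $X$ of layers of $\mathcal A$. For $G\in\mathcal L'$ of codimension $d$, a polynomial $P_G(t)\in B[t]$ is a good lifting of the Chern polynomial of $N_GX$ if (1) $P_G(0)$ is the cohomology class dual to the homology class of $G$, and (2) its image in $H^*(G,\mathbb Z)[t]$ under restriction of coefficients is $t^d+c_1(N_GX)t^{d-1}+\dots+c_d(N_GX)$.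 *)

theory Defs
  imports "HOL-Computational_Algebra.Polynomial"
begin

definition is_ideal :: "'a::comm_ring_1 set \<Rightarrow> bool" where
  "is_ideal J \<longleftrightarrow> 0 \<in> J \<and> (\<forall>x\<in>J. \<forall>y\<in>J. x + y \<in> J) \<and> (\<forall>r. \<forall>x\<in>J. r * x \<in> J)"

definition ideal_gen :: "'a::comm_ring_1 set \<Rightarrow> 'a set" where
  "ideal_gen S = \<Inter>{J. is_ideal J \<and> S \<subseteq> J}"

definition is_ring_hom :: "('a::comm_ring_1 \<Rightarrow> 'b::comm_ring_1) \<Rightarrow> bool" where
  "is_ring_hom f \<longleftrightarrow> f 1 = 1 \<and> (\<forall>x y. f (x + y) = f x + f y) \<and> (\<forall>x y. f (x * y) = f x * f y)"

definition chern_poly :: "nat \<Rightarrow> (nat \<Rightarrow> 'a::comm_ring_1) \<Rightarrow> 'a poly" where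
  "chern_poly d c = monom 1 d + (\<Sum>i\<in>{1..d}. monom (c i) (d - i))"

text \<open>Good lifting: P(0) is the class dual to G, and restricting coefficients gives the Chern polynomial.\<close>

definition good_lifting ::
  "('b::comm_ring_1 \<Rightarrow> 'h::comm_ring_1) \<Rightarrow> 'b \<Rightarrow> nat \<Rightarrow> (nat \<Rightarrow> 'h) \<Rightarrow> 'b poly \<Rightarrow> bool" where
  "good_lifting res clG d c P \<longleftrightarrow> poly P 0 = clG \<and> map_poly res P = chern_poly d c"

definition tI_P_ideal :: "('b::comm_ring_1 \<Rightarrow> 'h::comm_ring_1) \<Rightarrow> 'b poly \<Rightarrow> 'b poly set" where
  "tI_P_ideal res P = ideal_gen ({[:0, b:] | b. res b = 0} \<union> {pcompose P [:0, -1:]})"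

end

theory Submission
  imports Defs
begin

text \<open>Two good liftings P, Q have the same constant term and the same image in H^*(G)[t],
  so P - Q has zero constant term and coefficients in I. The same holds for
  P(-t) - Q(-t), which is therefore t times a polynomial with coefficients in I, hence lies
  in (tI). So P(-t) lies in the ideal generated by tI and Q(-t), and by symmetry the two
  ideals coincide.\<close>

lemma is_ideal_ideal_gen: "is_ideal (ideal_gen S)"
  unfolding is_ideal_def ideal_gen_def by auto

lemma ideal_gen_generators: "S \<subseteq> ideal_gen S"
  unfolding ideal_gen_def by auto

lemma ideal_gen_least: "is_ideal J \<Longrightarrow> S \<subseteq> J \<Longrightarrow> ideal_gen S \<subseteq> J"
  unfolding ideal_gen_def by auto

lemma is_ideal_add: "is_ideal J \<Longrightarrow> x \<in> J \<Longrightarrow> y \<in> J \<Longrightarrow> x + y \<in> J"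
  unfolding is_ideal_def by blast

lemma is_ideal_mult: "is_ideal J \<Longrightarrow> x \<in> J \<Longrightarrow> r * x \<in> J"
  unfolding is_ideal_def by blast

lemma is_ring_hom_0:
  assumes "is_ring_hom f"
  shows "f 0 = 0"
proof -
  have "f (0 + 0) = f 0 + f 0"
    using assms unfolding is_ring_hom_def by blast
  then show ?thesis by simp
qed

lemma is_ring_hom_mult_kernel:
  assumes "is_ring_hom f" and "f x = 0"
  shows "f (a * x) = 0"
  using assms unfolding is_ring_hom_def by simp

lemma is_ring_hom_diff_kernel:
  assumes "is_ring_hom f" and "f x = f y"
  shows "f (x - y) = 0"
proof -
  have "f (x - y) + f y = f x"
    using assms(1) unfolding is_ring_hom_def by (metis diff_add_cancel)
  then show ?thesis using assms(2) by simp
qed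

lemma coeff_pcompose_neg_X:
  fixes p :: "'a::comm_ring_1 poly"
  shows "coeff (pcompose p [:0, -1:]) i = (-1) ^ i * coeff p i"
proof (induction p arbitrary: i)
  case 0
  then show ?case by simp
next
  case (pCons a p)
  then show ?case
    by (cases i) (simp_all add: pcompose_pCons coeff_pCons)
qed

lemma pCons_0_in_ideal:
  assumes J: "is_ideal J"
    and tI: "\<And>b. f b = 0 \<Longrightarrow> [:0, b:] \<in> J"
    and "\<forall>i. f (coeff q i) = 0"
  shows "pCons 0 q \<in> J"
  using assms(3)
proof (induction q)
  case 0
  then show ?case using J unfolding is_ideal_def by simp
next
  case (pCons a q)
  have "[:0, a:] \<in> J"
    using tI pCons.prems by (metis coeff_pCons_0)
  moreover have "pCons 0 q \<in> J"
    using pCons.IH pCons.prems by (metis coeff_pCons_Suc)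
  then have "[:0, 1:] * pCons 0 q \<in> J"
    by (rule is_ideal_mult[OF J])
  ultimately have sum_J: "[:0, a:] + [:0, 1:] * pCons 0 q \<in> J"
    by (rule is_ideal_add[OF J])
  have "pCons 0 (pCons a q) = [:0, a:] + [:0, 1:] * pCons 0 q"
    by simp
  also have "\<dots> \<in> J"
    by (rule sum_J)
  finally show ?case .
qed

lemma tI_P_ideal_subset:
  assumes hom: "is_ring_hom res"
    and coeff_eq: "\<And>i. res (coeff P i) = res (coeff Q i)"
    and const_eq: "poly P 0 = poly Q 0"
  shows "tI_P_ideal res P \<subseteq> tI_P_ideal res Q"
proof -
  let ?J = "tI_P_ideal res Q"
  let ?D = "pcompose (P - Q) [:0, -1:]"
  have J: "is_ideal ?J"
    unfolding tI_P_ideal_def by (rule is_ideal_ideal_gen)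
  have tI: "[:0, b:] \<in> ?J" if "res b = 0" for b
    unfolding tI_P_ideal_def by (rule subsetD[OF ideal_gen_generators]) (use that in blast)
  have Q_J: "pcompose Q [:0, -1:] \<in> ?J"
    unfolding tI_P_ideal_def by (rule subsetD[OF ideal_gen_generators]) blast
  have D_kernel: "res (coeff ?D i) = 0" for i
  proof -
    have "res (coeff (P - Q) i) = 0"
      using is_ring_hom_diff_kernel[OF hom coeff_eq] by simp
    then show ?thesis
      unfolding coeff_pcompose_neg_X by (rule is_ring_hom_mult_kernel[OF hom])
  qed
  obtain r where r: "?D = pCons 0 r"
  proof (cases ?D)
    case (pCons a r)
    have "a = poly ?D 0"
      using pCons by (simp add: poly_0_coeff_0)
    also have "\<dots> = 0"
      using const_eq by (simp add: poly_pcompose)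
    finally show ?thesis using pCons that by simp
  qed
  have "\<forall>i. res (coeff r i) = 0"
    using D_kernel r by (metis coeff_pCons_Suc)
  then have "?D \<in> ?J"
    using pCons_0_in_ideal[OF J tI] r by simp
  moreover have "pcompose P [:0, -1:] = ?D + pcompose Q [:0, -1:]"
    by (simp add: pcompose_diff)
  ultimately have P_J: "pcompose P [:0, -1:] \<in> ?J"
    using is_ideal_add[OF J _ Q_J] by simp
  have "{[:0, b:] | b. res b = 0} \<union> {pcompose P [:0, -1:]} \<subseteq> ?J"
    using tI P_J by blast
  then show ?thesis
    unfolding tI_P_ideal_def[of res P] by (rule ideal_gen_least[OF J])
qed

theorem mainTheorem8:
  fixes res :: "'b::comm_ring_1 \<Rightarrow> 'h::comm_ring_1"
    and clG :: 'b and d :: nat and c :: "nat \<Rightarrow> 'h"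
    and P Q :: "'b poly"
  assumes "is_ring_hom res"
    and "good_lifting res clG d c P"
    and "good_lifting res clG d c Q"
  shows "tI_P_ideal res P = tI_P_ideal res Q"
proof -
  have "map_poly res P = map_poly res Q" and "poly P 0 = poly Q 0"
    using assms(2,3) unfolding good_lifting_def by simp_all
  moreover have "res (coeff P i) = res (coeff Q i)" if "map_poly res P = map_poly res Q" for i
    using arg_cong[OF that, of "\<lambda>p. coeff p i"]
    by (simp add: coeff_map_poly is_ring_hom_0[OF assms(1)])
  ultimately show ?thesis
    using tI_P_ideal_subset[OF assms(1)] by (simp add: subset_antisym)
qed

end
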